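(* Let $X$ be a metric space and let $F: X \Rightarrow \mathbb{R}^m$ be a (total) multi-valued function such that $F(x)$ is closed for every $x \in X$. Then: (a) the set of points of continuity of $F$ is a $\Sigma^0_3$ subset of $X$; (b) if moreover $F(x)$ is bounded for every $x\in X$, then the set of points of continuity of $F$ is a $\Pi^0_2$ subset of $X$.
   Context: A multi-valued function $F: X \Rightarrow Y$ assigns to each $x$ a set $F(x)\subseteq Y$; all multi-valued functions are total ($F(x)\ne\emptyset$). For metric spaces $(X,p),(Y,d)$, $F$ is continuous at $x$ if there is some $y \in F(x)$ such that for every $\varepsilon>0$ there is $\delta>0$ such that for every $x' \in B_p(x,\delta)$ there is $y' \in F(x')$ with $d(y,y')<\varepsilon$. $\mathbb{R}^m$ carries its usual metric. Borel hierarchy: $\Sigma^0_1$ = open; $\Sigma^0_{n+1}$ = countable unions of sets whose complements are $\Sigma^0_k$ for some $k\le n$; $\Pi^0_n$ = complements of $\Sigma^0_n$ sets ($\Pi^0_2 = G_\delta$, $\Sigma^0_3$ = countable unions of $G_\delta$ sets). *)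

theory Defs
  imports "HOL-Analysis.Analysis"
begin

text \<open>Multi-valued functions F :: 'a => 'b set; totality is an explicit hypothesis.
  Continuity at a point, as in the paper.\<close>
definition mv_continuous_at :: "('a::metric_space \<Rightarrow> 'b::metric_space set) \<Rightarrow> 'a \<Rightarrow> bool" where
  "mv_continuous_at F x \<longleftrightarrow>
     (\<exists>y\<in>F x. \<forall>\<epsilon>>0. \<exists>\<delta>>0. \<forall>x'\<in>ball x \<delta>. \<exists>y'\<in>F x'. dist y y' < \<epsilon>)"

text \<open>Borel hierarchy: sigma0 1 = open sets; sigma0 (n+1) = countable unions of sets
  whose complements are in sigma0 k for some 1 <= k <= n. (sigma0 0 is unused, empty.)\<close>
fun sigma0 :: "nat \<Rightarrow> 'a::topological_space set set" where
  "sigma0 0 = {}"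
| "sigma0 (Suc n) =
     (if n = 0 then {S. open S}
      else {\<Union>\<U> | \<U>. countable \<U> \<and> (\<forall>A\<in>\<U>. \<exists>k\<in>{1..n}. - A \<in> sigma0 k)})"

definition pi0 :: "nat \<Rightarrow> 'a::topological_space set set" where
  "pi0 n = {S. - S \<in> sigma0 n}"

end

theory Submission
  imports Defs
begin

text \<open>For \<open>\<epsilon> > 0\<close> and a set \<open>B\<close> of candidate values, the points \<open>x\<close> admitting some \<open>y \<in> B\<close> that
  stays \<open>\<epsilon>\<close>-close to \<open>F x'\<close> for all \<open>x'\<close> near \<open>x\<close> form an open set. With \<open>\<epsilon> = 1/(n+1)\<close>,
  closed values in a Heine--Borel space and candidate values from a fixed ball, the intersection
  over \<open>n\<close> is exactly the set of continuity points whose witnessing value lies in that ball: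
  a limit of a convergent subsequence of the candidates is a witness. So the continuity set is
  a countable union (over the radius) of \<open>G\<^sub>\<delta>\<close> sets; when \<open>F x\<close> is bounded, the candidates are
  automatically confined to a bounded set and a single \<open>G\<^sub>\<delta>\<close> set suffices.\<close>

definition mv_approx_continuity_points ::
    "('a::metric_space \<Rightarrow> 'b::metric_space set) \<Rightarrow> 'b set \<Rightarrow> real \<Rightarrow> 'a set" where
  "mv_approx_continuity_points F B \<epsilon> =
     {x. \<exists>y\<in>B. \<exists>\<delta>>0. \<forall>x'\<in>ball x \<delta>. \<exists>y'\<in>F x'. dist y y' < \<epsilon>}"

lemma open_mv_approx_continuity_points: "open (mv_approx_continuity_points F B \<epsilon>)"
  unfolding open_contains_ball
proof
  fix x assume "x \<in> mv_approx_continuity_points F B \<epsilon>"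
  then obtain y \<delta> where "y \<in> B" "\<delta> > 0"
    and near: "\<forall>x'\<in>ball x \<delta>. \<exists>y'\<in>F x'. dist y y' < \<epsilon>"
    unfolding mv_approx_continuity_points_def by blast
  have "u \<in> mv_approx_continuity_points F B \<epsilon>" if "u \<in> ball x \<delta>" for u
  proof -
    have "ball u (\<delta> - dist x u) \<subseteq> ball x \<delta>"
    proof
      fix v assume "v \<in> ball u (\<delta> - dist x u)"
      then show "v \<in> ball x \<delta>" using dist_triangle[of x v u] by simp
    qed
    moreover have "\<delta> - dist x u > 0" using that by simp
    ultimately show ?thesis
      unfolding mv_approx_continuity_points_def using \<open>y \<in> B\<close> near by blast
  qed
  then show "\<exists>e>0. ball x e \<subseteq> mv_approx_continuity_points F B \<epsilon>" using \<open>\<delta> > 0\<close> by blast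
qed

lemma mv_continuous_at_imp_approx_continuity_points:
  assumes "mv_continuous_at F x"
  shows "\<exists>y\<in>F x. \<forall>B \<epsilon>. y \<in> B \<longrightarrow> \<epsilon> > 0 \<longrightarrow> x \<in> mv_approx_continuity_points F B \<epsilon>"
proof -
  obtain y where "y \<in> F x"
    and near: "\<And>\<epsilon>. \<epsilon> > 0 \<Longrightarrow> \<exists>\<delta>>0. \<forall>x'\<in>ball x \<delta>. \<exists>y'\<in>F x'. dist y y' < \<epsilon>"
    using assms unfolding mv_continuous_at_def by blast
  have "x \<in> mv_approx_continuity_points F B \<epsilon>" if "y \<in> B" "\<epsilon> > 0" for B \<epsilon>
    using near[OF \<open>\<epsilon> > 0\<close>] \<open>y \<in> B\<close> unfolding mv_approx_continuity_points_def by blast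
  with \<open>y \<in> F x\<close> show ?thesis by blast
qed

lemma mv_continuous_at_if_approx_continuity_points:
  fixes F :: "'a::metric_space \<Rightarrow> 'b::heine_borel set"
  assumes approx: "\<And>n. x \<in> mv_approx_continuity_points F B (inverse (real (Suc n)))"
    and "bounded B" and "closed (F x)"
  shows "mv_continuous_at F x"
proof -
  have "\<forall>n. \<exists>y\<in>B. \<exists>\<delta>>0. \<forall>x'\<in>ball x \<delta>. \<exists>y'\<in>F x'. dist y y' < inverse (real (Suc n))"
    using approx unfolding mv_approx_continuity_points_def by blast
  then obtain y where "\<And>n. y n \<in> B" and near:
    "\<And>n. \<exists>\<delta>>0. \<forall>x'\<in>ball x \<delta>. \<exists>y'\<in>F x'. dist (y n) y' < inverse (real (Suc n))"
    by metis
  then have "bounded (range y)" by (meson \<open>bounded B\<close> bounded_subset image_subsetI)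
  then obtain l r where "strict_mono r" and lim: "(y \<circ> r) \<longlonglongrightarrow> l"
    using bounded_imp_convergent_subsequence by blast
  have l_near: "\<exists>\<delta>>0. \<forall>x'\<in>ball x \<delta>. \<exists>y'\<in>F x'. dist l y' < e" if "e > 0" for e
  proof -
    have "(\<lambda>n. inverse (real (Suc (r n)))) \<longlonglongrightarrow> 0"
      using LIMSEQ_subseq_LIMSEQ[OF LIMSEQ_inverse_real_of_nat \<open>strict_mono r\<close>]
      by (simp add: o_def)
    then have "\<forall>\<^sub>F n in sequentially. inverse (real (Suc (r n))) < e/2"
      by (rule order_tendstoD(2)) (use \<open>e > 0\<close> in simp)
    moreover have "\<forall>\<^sub>F n in sequentially. dist (y (r n)) l < e/2"
      using tendstoD[OF lim, of "e/2"] \<open>e > 0\<close> by (simp add: o_def)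
    ultimately have "\<forall>\<^sub>F n in sequentially. inverse (real (Suc (r n))) < e/2 \<and> dist (y (r n)) l < e/2"
      by (rule eventually_conj)
    then obtain N where N: "inverse (real (Suc (r N))) < e/2" "dist (y (r N)) l < e/2"
      unfolding eventually_sequentially by blast
    obtain \<delta> where "\<delta> > 0"
      and \<delta>: "\<forall>x'\<in>ball x \<delta>. \<exists>y'\<in>F x'. dist (y (r N)) y' < inverse (real (Suc (r N)))"
      using near by blast
    have "\<exists>y'\<in>F x'. dist l y' < e" if x': "x' \<in> ball x \<delta>" for x'
    proof -
      obtain y' where "y' \<in> F x'" and close: "dist (y (r N)) y' < inverse (real (Suc (r N)))"
        using bspec[OF \<delta> x'] by blast
      moreover have "dist l y' < e"
        using dist_triangle3[of l y' "y (r N)"] N close by linarith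
      ultimately show ?thesis by blast
    qed
    then show ?thesis using \<open>\<delta> > 0\<close> by blast
  qed
  have "l \<in> F x"
  proof -
    have "\<exists>y'\<in>F x. dist y' l < e" if "e > 0" for e
      using l_near[OF that] by (metis centre_in_ball dist_commute)
    then show ?thesis
      using \<open>closed (F x)\<close> closure_approachable closure_closed by blast
  qed
  then show ?thesis using l_near unfolding mv_continuous_at_def by blast
qed

lemma mv_continuous_at_iff_approx_continuity_points_cball:
  fixes F :: "'a::metric_space \<Rightarrow> 'b::{heine_borel,real_normed_vector} set"
  assumes "closed (F x)"
  shows "mv_continuous_at F x \<longleftrightarrow>
    (\<exists>k::nat. \<forall>n. x \<in> mv_approx_continuity_points F (cball 0 (real k)) (inverse (real (Suc n))))"
proof
  assume "mv_continuous_at F x"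
  then obtain y where
    y: "\<And>B \<epsilon>. y \<in> B \<Longrightarrow> \<epsilon> > 0 \<Longrightarrow> x \<in> mv_approx_continuity_points F B \<epsilon>"
    using mv_continuous_at_imp_approx_continuity_points by blast
  obtain k :: nat where "norm y \<le> real k" using real_arch_simple by blast
  then have "\<forall>n. x \<in> mv_approx_continuity_points F (cball 0 (real k)) (inverse (real (Suc n)))"
    by (intro allI y) auto
  then show "\<exists>k::nat. \<forall>n. x \<in> mv_approx_continuity_points F (cball 0 (real k)) (inverse (real (Suc n)))" ..
next
  assume "\<exists>k::nat. \<forall>n. x \<in> mv_approx_continuity_points F (cball 0 (real k)) (inverse (real (Suc n)))"
  then obtain k :: nat
    where "\<And>n. x \<in> mv_approx_continuity_points F (cball 0 (real k)) (inverse (real (Suc n)))"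
    by blast
  then show "mv_continuous_at F x"
    using bounded_cball \<open>closed (F x)\<close> by (rule mv_continuous_at_if_approx_continuity_points)
qed

text \<open>For bounded values no a-priori bound on the candidates is needed: testing the
  candidate at \<open>x' = x\<close> already places it within distance \<open>1\<close> of the bounded set \<open>F x\<close>.\<close>

lemma mv_continuous_at_iff_approx_continuity_points_UNIV:
  fixes F :: "'a::metric_space \<Rightarrow> 'b::heine_borel set"
  assumes "closed (F x)" "bounded (F x)"
  shows "mv_continuous_at F x \<longleftrightarrow>
    (\<forall>n. x \<in> mv_approx_continuity_points F UNIV (inverse (real (Suc n))))"
proof
  assume "mv_continuous_at F x"
  then show "\<forall>n. x \<in> mv_approx_continuity_points F UNIV (inverse (real (Suc n)))"
    using mv_continuous_at_imp_approx_continuity_points by fastforce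
next
  assume approx: "\<forall>n. x \<in> mv_approx_continuity_points F UNIV (inverse (real (Suc n)))"
  obtain a R where R: "\<And>z. z \<in> F x \<Longrightarrow> dist a z \<le> R"
    using \<open>bounded (F x)\<close> unfolding bounded_def by blast
  have "x \<in> mv_approx_continuity_points F (cball a (R + 1)) (inverse (real (Suc n)))" for n
  proof -
    obtain y \<delta> where "\<delta> > 0" and near:
      "\<forall>x'\<in>ball x \<delta>. \<exists>y'\<in>F x'. dist y y' < inverse (real (Suc n))"
      using approx unfolding mv_approx_continuity_points_def by blast
    then obtain z where "z \<in> F x" "dist y z < inverse (real (Suc n))" by force
    moreover have "inverse (real (Suc n)) \<le> 1" by (simp add: inverse_le_1_iff)
    ultimately have "y \<in> cball a (R + 1)"
      using R[OF \<open>z \<in> F x\<close>] dist_triangle[of a y z] dist_commute[of y z] by simp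
    then show ?thesis
      using \<open>\<delta> > 0\<close> near unfolding mv_approx_continuity_points_def by blast
  qed
  then show "mv_continuous_at F x"
    using bounded_cball \<open>closed (F x)\<close> by (rule mv_continuous_at_if_approx_continuity_points)
qed

lemma Inter_open_in_pi0_2:
  assumes "\<And>n::nat. open (U n)"
  shows "(\<Inter>n. U n) \<in> pi0 2"
proof -
  have "- (\<Inter>n. U n) = \<Union> (range (\<lambda>n. - U n))" by auto
  then show ?thesis
    using assms by (auto simp: pi0_def numeral_eq_Suc intro!: exI[of _ "range (\<lambda>n. - U n)"])
qed

lemma Union_pi0_2_in_sigma0_3:
  assumes "\<And>k::nat. V k \<in> pi0 2"
  shows "(\<Union>k. V k) \<in> sigma0 3"
proof -
  have "\<forall>A\<in>range V. \<exists>k\<in>{1..2::nat}. - A \<in> sigma0 k"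
    using assms unfolding pi0_def by (auto intro!: bexI[of _ 2])
  moreover have "(3::nat) = Suc 2" by simp
  ultimately show ?thesis
    by (simp only: sigma0.simps(2)) (auto intro!: exI[of _ "range V"])
qed

theorem corollary2p2:
  fixes F :: "'a::metric_space \<Rightarrow> (real^'m) set"
  assumes "\<And>x. F x \<noteq> {}"
    and closed: "\<And>x. closed (F x)"
  shows "{x. mv_continuous_at F x} \<in> sigma0 3 \<and>
         ((\<forall>x. bounded (F x)) \<longrightarrow> {x. mv_continuous_at F x} \<in> pi0 2)"
proof
  let ?U = "\<lambda>B n. mv_approx_continuity_points F B (inverse (real (Suc n)))"
  have "{x. mv_continuous_at F x} = (\<Union>k::nat. \<Inter>n. ?U (cball 0 (real k)) n)"
    by (auto simp: mv_continuous_at_iff_approx_continuity_points_cball[OF closed])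
  then show "{x. mv_continuous_at F x} \<in> sigma0 3"
    by (simp add: Union_pi0_2_in_sigma0_3 Inter_open_in_pi0_2 open_mv_approx_continuity_points)
  show "(\<forall>x. bounded (F x)) \<longrightarrow> {x. mv_continuous_at F x} \<in> pi0 2"
  proof
    assume "\<forall>x. bounded (F x)"
    then have "{x. mv_continuous_at F x} = (\<Inter>n. ?U UNIV n)"
      by (auto simp: mv_continuous_at_iff_approx_continuity_points_UNIV[OF closed])
    then show "{x. mv_continuous_at F x} \<in> pi0 2"
      by (simp add: Inter_open_in_pi0_2 open_mv_approx_continuity_points)
  qed
qed

end
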